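(* Let $s\geq2$ and $\phi\in\mathrm{Aut}_{s-1}(H)$. Then there exists a unique $\beta=(\beta_n)_{n\in\mathbb{Z}}\in k^{\mathbb{Z}}$ such that $\phi(x^ny^s)=x^ny^s+\beta_n(x^{n+s}-x^n)$ for all $n\in\mathbb{Z}$.
   Context: Let $k$ be a field and $0\neq q\in k$ not a root of unity. $H=k_q[x,x^{-1},y]$ is the $k$-algebra generated by $x,x^{-1},y$ with $xx^{-1}=x^{-1}x=1$, $yx=qxy$, a Hopf algebra with $\Delta(x)=x\otimes x$, $\Delta(x^{-1})=x^{-1}\otimes x^{-1}$, $\Delta(y)=y\otimes x+1\otimes y$, $\varepsilon(x)=1$, $\varepsilon(y)=0$; $\{x^ny^m:n\in\mathbb{Z},m\in\mathbb{N}\}$ is a $k$-basis. $H_0=\mathrm{span}\{x^n\}$, $H(m)=H_0y^m$. $\mathrm{Aut}_c(H)$ is the group of coalgebra automorphisms of $H$, and for $m\geq1$, $\mathrm{Aut}_m(H)=\{\phi\in\mathrm{Aut}_c(H):\phi(h)=h\text{ for all }h\in\sum_{i=0}^mH(i)\}$. *)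

theory Defs
  imports Main
begin

text \<open>Elements of H = k_q[x,x^-1,y] are represented by their coordinate functions
  w.r.t. the basis x^n y^m, indexed by (n,m) :: int \<times> nat; elements of H \<otimes> H by
  coordinate functions w.r.t. the basis (x^a y^b) \<otimes> (x^c y^d).\<close>

definition csupp :: "('a \<Rightarrow> 'k::zero) \<Rightarrow> 'a set" where
  "csupp f = {a. f a \<noteq> 0}"

definition Hsp :: "(int \<times> nat \<Rightarrow> 'k::zero) set" where
  "Hsp = {f. finite (csupp f)}"

definition bas :: "'a \<Rightarrow> 'a \<Rightarrow> 'k::{zero,one}" where
  "bas a = (\<lambda>b. if b = a then 1 else 0)"

definition lin :: "('a \<Rightarrow> 'b \<Rightarrow> 'k::comm_semiring_1) \<Rightarrow> ('a \<Rightarrow> 'k) \<Rightarrow> 'b \<Rightarrow> 'k" where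
  "lin T f = (\<lambda>c. \<Sum>a\<in>csupp f. f a * T a c)"

text \<open>Bilinear extension of a twisted monomial multiplication
  (basis a times basis b = tw a b * basis (comb a b)).\<close>
definition twmul :: "('a \<Rightarrow> 'a \<Rightarrow> 'a) \<Rightarrow> ('a \<Rightarrow> 'a \<Rightarrow> 'k::comm_semiring_1)
     \<Rightarrow> ('a \<Rightarrow> 'k) \<Rightarrow> ('a \<Rightarrow> 'k) \<Rightarrow> 'a \<Rightarrow> 'k" where
  "twmul comb tw f g = (\<lambda>c. \<Sum>p\<in>{(a,b). a \<in> csupp f \<and> b \<in> csupp g \<and> comb a b = c}.
      f (fst p) * g (snd p) * tw (fst p) (snd p))"

text \<open>Multiplication in H: (x^a y^b)(x^c y^d) = q^(b c) x^(a+c) y^(b+d), since y x = q x y.\<close>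
definition hcomb :: "int \<times> nat \<Rightarrow> int \<times> nat \<Rightarrow> int \<times> nat" where
  "hcomb u v = (fst u + fst v, snd u + snd v)"

definition htw :: "'k::field \<Rightarrow> int \<times> nat \<Rightarrow> int \<times> nat \<Rightarrow> 'k" where
  "htw q u v = q powi (int (snd u) * fst v)"

definition hmul :: "'k::field \<Rightarrow> (int \<times> nat \<Rightarrow> 'k) \<Rightarrow> (int \<times> nat \<Rightarrow> 'k) \<Rightarrow> int \<times> nat \<Rightarrow> 'k" where
  "hmul q = twmul hcomb (htw q)"

definition tcomb :: "(int \<times> nat) \<times> (int \<times> nat) \<Rightarrow> (int \<times> nat) \<times> (int \<times> nat) \<Rightarrow> (int \<times> nat) \<times> (int \<times> nat)" where
  "tcomb u v = (hcomb (fst u) (fst v), hcomb (snd u) (snd v))"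

definition ttw :: "'k::field \<Rightarrow> (int \<times> nat) \<times> (int \<times> nat) \<Rightarrow> (int \<times> nat) \<times> (int \<times> nat) \<Rightarrow> 'k" where
  "ttw q u v = htw q (fst u) (fst v) * htw q (snd u) (snd v)"

definition tmul :: "'k::field \<Rightarrow> ((int \<times> nat) \<times> (int \<times> nat) \<Rightarrow> 'k)
    \<Rightarrow> ((int \<times> nat) \<times> (int \<times> nat) \<Rightarrow> 'k) \<Rightarrow> (int \<times> nat) \<times> (int \<times> nat) \<Rightarrow> 'k" where
  "tmul q = twmul tcomb (ttw q)"

text \<open>\<Delta>(y) = y \<otimes> x + 1 \<otimes> y, \<Delta>(x^n) = x^n \<otimes> x^n.\<close>
definition Delta_y :: "(int \<times> nat) \<times> (int \<times> nat) \<Rightarrow> 'k::field" where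
  "Delta_y = (\<lambda>c. bas ((0,1),(1,0)) c + bas ((0,0),(0,1)) c)"

text \<open>\<Delta>(x^n y^m) = \<Delta>(x)^n \<Delta>(y)^m (\<Delta> is an algebra map).\<close>
definition Dbasis :: "'k::field \<Rightarrow> int \<times> nat \<Rightarrow> (int \<times> nat) \<times> (int \<times> nat) \<Rightarrow> 'k" where
  "Dbasis q a = tmul q (bas ((fst a, 0), (fst a, 0)))
       ((tmul q Delta_y ^^ snd a) (bas ((0,0),(0,0))))"

definition comult :: "'k::field \<Rightarrow> (int \<times> nat \<Rightarrow> 'k) \<Rightarrow> (int \<times> nat) \<times> (int \<times> nat) \<Rightarrow> 'k" where
  "comult q f = lin (Dbasis q) f"

definition counit :: "(int \<times> nat \<Rightarrow> 'k::field) \<Rightarrow> 'k" where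
  "counit f = (\<Sum>a\<in>csupp f. f a * (if snd a = 0 then 1 else 0))"

definition tmap :: "((int \<times> nat \<Rightarrow> 'k::field) \<Rightarrow> (int \<times> nat \<Rightarrow> 'k)) \<Rightarrow> ((int \<times> nat \<Rightarrow> 'k) \<Rightarrow> (int \<times> nat \<Rightarrow> 'k))
    \<Rightarrow> ((int \<times> nat) \<times> (int \<times> nat) \<Rightarrow> 'k) \<Rightarrow> (int \<times> nat) \<times> (int \<times> nat) \<Rightarrow> 'k" where
  "tmap \<phi> \<psi> g = lin (\<lambda>p. \<lambda>c. \<phi> (bas (fst p)) (fst c) * \<psi> (bas (snd p)) (snd c)) g"

definition linear_on_H :: "((int \<times> nat \<Rightarrow> 'k::field) \<Rightarrow> (int \<times> nat \<Rightarrow> 'k)) \<Rightarrow> bool" where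
  "linear_on_H \<phi> \<longleftrightarrow>
     (\<forall>f\<in>Hsp. \<forall>g\<in>Hsp. \<phi> (\<lambda>a. f a + g a) = (\<lambda>a. \<phi> f a + \<phi> g a)) \<and>
     (\<forall>f\<in>Hsp. \<forall>c. \<phi> (\<lambda>a. c * f a) = (\<lambda>a. c * \<phi> f a))"

text \<open>Coalgebra automorphisms of H (the map is considered on Hsp only).\<close>
definition Aut_c :: "'k::field \<Rightarrow> ((int \<times> nat \<Rightarrow> 'k) \<Rightarrow> (int \<times> nat \<Rightarrow> 'k)) set" where
  "Aut_c q = {\<phi>. linear_on_H \<phi> \<and> bij_betw \<phi> Hsp Hsp \<and>
      (\<forall>f\<in>Hsp. comult q (\<phi> f) = tmap \<phi> \<phi> (comult q f) \<and> counit (\<phi> f) = counit f)}"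

text \<open>Aut_m(H): coalgebra automorphisms fixing H(0) + ... + H(m) pointwise.\<close>
definition Aut_m :: "'k::field \<Rightarrow> nat \<Rightarrow> ((int \<times> nat \<Rightarrow> 'k) \<Rightarrow> (int \<times> nat \<Rightarrow> 'k)) set" where
  "Aut_m q m = {\<phi>. \<phi> \<in> Aut_c q \<and>
      (\<forall>h\<in>Hsp. (\<forall>a\<in>csupp h. snd a \<le> m) \<longrightarrow> \<phi> h = h)}"

end

theory Submission
  imports Defs
begin

text \<open>Write \<phi>(x^n y^s) = g. Since \<phi> fixes all x^m y^j with j < s, applying \<Delta> to g and
  comparing with (\<phi> \<otimes> \<phi>)(\<Delta>(x^n y^s)) gives an identity in H \<otimes> H whose only unknown terms are
  x^n \<otimes> g and g \<otimes> x^(n+s).  The coefficient of x^a y \<otimes> x^(a+1) y^(b-1) in \<Delta>(g) is the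
  Gaussian binomial coefficient [b choose 1]_q times g(x^a y^b), which is nonzero because q is not
  a root of unity; this forces g(x^a y^b) = \<delta>(a,b),(n,s) for b \<ge> 2.  The remaining coefficients
  show that g has no component of y-degree 1 and that its y-degree 0 part is \<beta> (x^(n+s) - x^n).\<close>

lemma twmul_eq_sum_sum:
  assumes "finite S" "csupp f \<subseteq> S" "finite T" "csupp g \<subseteq> T"
  shows "twmul comb tw f g c =
    (\<Sum>a\<in>S. \<Sum>b\<in>T. if comb a b = c then f a * g b * tw a b else 0)"
proof -
  have fin: "finite (csupp f)" "finite (csupp g)" using assms finite_subset by blast+
  have "(\<Sum>a\<in>S. \<Sum>b\<in>T. if comb a b = c then f a * g b * tw a b else 0)
      = (\<Sum>a\<in>csupp f. \<Sum>b\<in>T. if comb a b = c then f a * g b * tw a b else 0)"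
    by (rule sum.mono_neutral_right[OF assms(1,2)])
      (auto simp: csupp_def intro!: sum.neutral split: if_splits)
  also have "\<dots> = (\<Sum>a\<in>csupp f. \<Sum>b\<in>csupp g. if comb a b = c then f a * g b * tw a b else 0)"
    by (rule sum.cong[OF refl], rule sum.mono_neutral_right[OF assms(3,4)]) (auto simp: csupp_def)
  also have "\<dots> = (\<Sum>p\<in>csupp f \<times> csupp g.
      if comb (fst p) (snd p) = c then f (fst p) * g (snd p) * tw (fst p) (snd p) else 0)"
    by (simp add: sum.cartesian_product case_prod_beta)
  also have "\<dots> = (\<Sum>p\<in>{p\<in>csupp f \<times> csupp g. comb (fst p) (snd p) = c}.
      f (fst p) * g (snd p) * tw (fst p) (snd p))"
    by (rule sum.inter_filter[symmetric]) (use fin in simp)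
  also have "{p\<in>csupp f \<times> csupp g. comb (fst p) (snd p) = c}
      = {(a,b). a \<in> csupp f \<and> b \<in> csupp g \<and> comb a b = c}"
    by auto
  finally show ?thesis by (simp add: twmul_def)
qed

lemma sum_if_unique:
  assumes "\<And>b. P b \<longleftrightarrow> Q \<and> b = b\<^sub>0" "finite T" "b\<^sub>0 \<notin> T \<Longrightarrow> F b\<^sub>0 = 0"
  shows "(\<Sum>b\<in>T. if P b then F b else (0::'a::comm_monoid_add)) = (if Q then F b\<^sub>0 else 0)"
proof (cases Q)
  case True
  then have "(\<Sum>b\<in>T. if P b then F b else 0) = (\<Sum>b\<in>T. if b = b\<^sub>0 then F b else 0)"
    using assms(1) by (intro sum.cong) auto
  also have "\<dots> = (if b\<^sub>0 \<in> T then F b\<^sub>0 else 0)"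
    using assms(2) by (simp add: sum.delta')
  finally show ?thesis using True assms(3) by auto
qed (use assms(1) in simp)

lemma csupp_bas: "csupp (bas a :: _ \<Rightarrow> 'k::zero_neq_one) = {a}"
  by (auto simp: csupp_def bas_def)

lemma bas_in_Hsp: "(bas a :: int \<times> nat \<Rightarrow> 'k::zero_neq_one) \<in> Hsp"
  by (simp add: Hsp_def csupp_bas)

text \<open>The q-Pascal rule reflects (y \<otimes> x)(1 \<otimes> y) = q (1 \<otimes> y)(y \<otimes> x) in H \<otimes> H, so qbinom q m i
  is the coefficient of y^i \<otimes> x^i y^(m-i) in \<Delta>(y)^m.\<close>

fun qbinom :: "'k::field \<Rightarrow> nat \<Rightarrow> nat \<Rightarrow> 'k" where
  "qbinom q 0 i = (if i = 0 then 1 else 0)"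
| "qbinom q (Suc m) i = (if i = 0 then 0 else qbinom q m (i - 1)) + q ^ i * qbinom q m i"

lemma qbinom_eq_0: "m < i \<Longrightarrow> qbinom q m i = 0"
  by (induction m arbitrary: i) auto

lemma qbinom_0_right [simp]: "qbinom q m 0 = 1"
  by (induction m) auto

lemma qbinom_diag [simp]: "qbinom q m m = 1"
  by (induction m) (auto simp: qbinom_eq_0)

lemma qbinom_1_right: "(1 - q) * qbinom q m 1 = 1 - q ^ m"
proof (induction m)
  case (Suc m)
  then have "q * ((1 - q) * qbinom q m 1) = q * (1 - q ^ m)" by simp
  then show ?case by (simp add: algebra_simps)
qed simp

lemma qbinom_1_right_nonzero:
  assumes "\<forall>n::nat. n > 0 \<longrightarrow> q ^ n \<noteq> 1" "m > 0"
  shows "qbinom q m 1 \<noteq> 0"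
  using qbinom_1_right[of q m] assms by force

definition Delta_y_pow :: "'k::field \<Rightarrow> nat \<Rightarrow> (int \<times> nat) \<times> (int \<times> nat) \<Rightarrow> 'k" where
  "Delta_y_pow q m c =
    (if fst (fst c) = 0 \<and> fst (snd c) = int (snd (fst c)) \<and> snd (fst c) + snd (snd c) = m
     then qbinom q m (snd (fst c)) else 0)"

lemma finite_csupp_Delta_y_pow: "finite (csupp (Delta_y_pow q m))"
proof (rule finite_subset)
  show "csupp (Delta_y_pow q m) \<subseteq> (\<lambda>i. ((0,i),(int i, m - i))) ` {..m}"
    by (auto simp: csupp_def Delta_y_pow_def split: if_splits intro!: image_eqI)
qed simp

lemma tmul_Delta_y_Delta_y_pow: "tmul q Delta_y (Delta_y_pow q m) = Delta_y_pow q (Suc m)"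
proof
  fix c :: "(int \<times> nat) \<times> (int \<times> nat)"
  obtain a i a' j where c: "c = ((a,i),(a',j))" by (metis prod.exhaust)
  define u\<^sub>1 :: "(int \<times> nat) \<times> (int \<times> nat)" where "u\<^sub>1 = ((0,1),(1,0))"
  define u\<^sub>2 :: "(int \<times> nat) \<times> (int \<times> nat)" where "u\<^sub>2 = ((0,0),(0,1))"
  let ?E = "Delta_y_pow q m"
  let ?term = "\<lambda>u b. if tcomb u b = c then Delta_y u * ?E b * ttw q u b else 0"
  have supp: "csupp (Delta_y :: _ \<Rightarrow> 'a) \<subseteq> {u\<^sub>1, u\<^sub>2}"
    by (auto simp: csupp_def Delta_y_def bas_def u\<^sub>1_def u\<^sub>2_def split: if_splits)
  have "tmul q Delta_y ?E c = (\<Sum>u\<in>{u\<^sub>1,u\<^sub>2}. \<Sum>b\<in>csupp ?E. ?term u b)"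
    unfolding tmul_def by (rule twmul_eq_sum_sum[OF _ supp finite_csupp_Delta_y_pow order_refl]) simp
  also have "\<dots> = (\<Sum>b\<in>csupp ?E. ?term u\<^sub>1 b) + (\<Sum>b\<in>csupp ?E. ?term u\<^sub>2 b)"
    by (simp add: sum.insert u\<^sub>1_def u\<^sub>2_def cong: if_cong)
  also have "(\<Sum>b\<in>csupp ?E. ?term u\<^sub>1 b) =
      (if i \<ge> 1 then Delta_y u\<^sub>1 * ?E ((a, i-1),(a'-1,j)) * ttw q u\<^sub>1 ((a, i-1),(a'-1,j)) else 0)"
    by (rule sum_if_unique[OF _ finite_csupp_Delta_y_pow])
      (auto simp: c u\<^sub>1_def tcomb_def hcomb_def csupp_def)
  also have "(\<Sum>b\<in>csupp ?E. ?term u\<^sub>2 b) =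
      (if j \<ge> 1 then Delta_y u\<^sub>2 * ?E ((a, i),(a',j-1)) * ttw q u\<^sub>2 ((a, i),(a',j-1)) else 0)"
    by (rule sum_if_unique[OF _ finite_csupp_Delta_y_pow])
      (auto simp: c u\<^sub>2_def tcomb_def hcomb_def csupp_def)
  finally have "tmul q Delta_y ?E c =
      (if i \<ge> 1 then Delta_y u\<^sub>1 * ?E ((a, i-1),(a'-1,j)) * ttw q u\<^sub>1 ((a, i-1),(a'-1,j)) else 0)
      + (if j \<ge> 1 then Delta_y u\<^sub>2 * ?E ((a, i),(a',j-1)) * ttw q u\<^sub>2 ((a, i),(a',j-1)) else 0)" .
  then show "tmul q Delta_y ?E c = Delta_y_pow q (Suc m) c"
    by (simp only:) (auto simp: c u\<^sub>1_def u\<^sub>2_def Delta_y_def bas_def Delta_y_pow_def ttw_def htw_def qbinom_eq_0)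
qed

lemma Delta_y_power: "(tmul q Delta_y ^^ m) (bas ((0,0),(0,0))) = Delta_y_pow q m"
proof (induction m)
  case 0
  show ?case by (auto simp: Delta_y_pow_def bas_def fun_eq_iff)
qed (simp add: tmul_Delta_y_Delta_y_pow)

lemma Dbasis_apply:
  "Dbasis q (n,m) ((a,i),(a',j)) =
    (if a = n \<and> a' = n + int i \<and> i + j = m then qbinom q m i else 0)"
proof -
  define w :: "(int \<times> nat) \<times> (int \<times> nat)" where "w = ((n,0),(n,0))"
  let ?E = "Delta_y_pow q m"
  have "Dbasis q (n,m) ((a,i),(a',j)) = tmul q (bas w) ?E ((a,i),(a',j))"
    by (simp add: Dbasis_def Delta_y_power w_def)
  also have "\<dots> = (\<Sum>u\<in>{w}. \<Sum>b\<in>csupp ?E.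
      if tcomb u b = ((a,i),(a',j)) then bas w u * ?E b * ttw q u b else 0)"
    unfolding tmul_def by (rule twmul_eq_sum_sum) (auto simp: finite_csupp_Delta_y_pow csupp_bas)
  also have "\<dots> = bas w w * ?E ((a - n,i),(a' - n,j)) * ttw q w ((a - n,i),(a' - n,j))"
    by (simp, rule sum_if_unique[where Q=True, OF _ finite_csupp_Delta_y_pow, simplified])
      (auto simp: w_def tcomb_def hcomb_def csupp_def)
  finally show ?thesis
    by (auto simp: w_def bas_def Delta_y_pow_def ttw_def htw_def)
qed

lemma comult_apply:
  assumes "finite (csupp g)"
  shows "comult q g ((a,i),(a',j)) = (if a' = a + int i then g (a, i+j) * qbinom q (i+j) i else 0)"
proof -
  have "comult q g ((a,i),(a',j)) = (\<Sum>u\<in>csupp g. g u * Dbasis q u ((a,i),(a',j)))"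
    by (simp add: comult_def lin_def)
  also have "\<dots> = (\<Sum>u\<in>csupp g.
      if fst u = a \<and> a' = a + int i \<and> i + j = snd u then g u * qbinom q (snd u) i else 0)"
    by (rule sum.cong) (auto simp: Dbasis_apply split: if_splits)
  also have "\<dots> = (if a' = a + int i then g (a, i+j) * qbinom q (i+j) i else 0)"
    by (rule trans, rule sum_if_unique[where b\<^sub>0="(a, i+j)" and Q="a' = a + int i"
          and F="\<lambda>u. g u * qbinom q (snd u) i"]) (use assms in \<open>auto simp: csupp_def\<close>)
  finally show ?thesis .
qed

lemma comult_bas: "comult q (bas a) = Dbasis q a"
  by (simp add: comult_def lin_def csupp_bas) (simp add: bas_def)

text \<open>(\<phi> \<otimes> \<phi>)(\<Delta>(x^n y^s)) for a map \<phi> fixing every x^m y^j with j < s: only the two extreme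
  terms of \<Delta>(x^n y^s) = \<Sum>_j [s choose j]_q x^n y^j \<otimes> x^(n+j) y^(s-j) are moved by \<phi>.\<close>

lemma tmap_comult_bas_apply:
  assumes s: "s \<ge> 2" and fix_low: "\<And>m j. j < s \<Longrightarrow> \<phi> (bas (m,j)) = bas (m,j)"
  shows "tmap \<phi> \<phi> (comult q (bas (n,s))) ((a,i),(a',j)) =
    bas (n,0) (a,i) * \<phi> (bas (n,s)) (a',j) + \<phi> (bas (n,s)) (a,i) * bas (n + int s,0) (a',j)
    + (if a = n \<and> 1 \<le> i \<and> i < s then qbinom q s i * bas (n + int i, s - i) (a',j) else 0)"
proof -
  define P where "P = Dbasis q (n,s)"
  define e where "e = (\<lambda>k::nat. ((n,k),(n + int k, s - k)))"
  let ?T = "\<lambda>k. qbinom q s k * (\<phi> (bas (n,k)) (a,i) * \<phi> (bas (n + int k, s - k)) (a',j))"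
  have supp: "csupp P \<subseteq> e ` {..s}"
    by (force simp: P_def e_def csupp_def Dbasis_apply split: if_splits)
  have "tmap \<phi> \<phi> (comult q (bas (n,s))) ((a,i),(a',j)) =
      (\<Sum>p\<in>csupp P. P p * (\<phi> (bas (fst p)) (a,i) * \<phi> (bas (snd p)) (a',j)))"
    by (simp add: tmap_def lin_def comult_bas P_def)
  also have "\<dots> = (\<Sum>p\<in>e ` {..s}. P p * (\<phi> (bas (fst p)) (a,i) * \<phi> (bas (snd p)) (a',j)))"
    by (rule sum.mono_neutral_left[OF _ supp]) (auto simp: csupp_def)
  also have "\<dots> = (\<Sum>k\<in>{..s}. ?T k)"
    by (subst sum.reindex) (auto simp: inj_on_def e_def P_def Dbasis_apply)
  also have "{..s} = insert 0 (insert s {1..<s})" using s by auto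
  also have "(\<Sum>k\<in>insert 0 (insert s {1..<s}). ?T k) = ?T 0 + ?T s + (\<Sum>k\<in>{1..<s}. ?T k)"
    using s by (simp add: algebra_simps)
  also have "(\<Sum>k\<in>{1..<s}. ?T k) =
      (\<Sum>k\<in>{1..<s}. if k = i then (if a = n then qbinom q s k * bas (n + int k, s - k) (a',j) else 0) else 0)"
    by (rule sum.cong) (auto simp: fix_low, auto simp: bas_def)
  also have "\<dots> = (if a = n \<and> 1 \<le> i \<and> i < s then qbinom q s i * bas (n + int i, s - i) (a',j) else 0)"
    by (simp add: sum.delta')
  finally show ?thesis using s by (simp add: fix_low)
qed

lemma image_bas_shape:
  fixes q :: "'k::field" and \<phi> :: "(int \<times> nat \<Rightarrow> 'k) \<Rightarrow> (int \<times> nat \<Rightarrow> 'k)"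
  assumes q: "\<forall>n::nat. n > 0 \<longrightarrow> q ^ n \<noteq> 1" and s: "s \<ge> 2"
    and fix_low: "\<And>m j. j < s \<Longrightarrow> \<phi> (bas (m,j)) = bas (m,j)"
    and fin: "finite (csupp (\<phi> (bas (n,s))))"
    and comult: "comult q (\<phi> (bas (n,s))) = tmap \<phi> \<phi> (comult q (bas (n,s)))"
  shows "\<phi> (bas (n,s)) =
    (\<lambda>c. bas (n,s) c + \<phi> (bas (n,s)) (n + int s, 0) * (bas (n + int s, 0) c - bas (n,0) c))"
    (is "?g = _")
proof
  have coeff: "(if a' = a + int i then ?g (a, i+j) * qbinom q (i+j) i else 0) =
      bas (n,0) (a,i) * ?g (a',j) + ?g (a,i) * bas (n + int s,0) (a',j)
      + (if a = n \<and> 1 \<le> i \<and> i < s then qbinom q s i * bas (n + int i, s - i) (a',j) else 0)"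
    for a i a' j
    using fun_cong[OF comult, of "((a,i),(a',j))"]
    by (simp add: comult_apply[OF fin] tmap_comult_bas_apply[OF s fix_low])
  have high: "?g (a,b) = (if a = n \<and> b = s then 1 else 0)" if "b \<ge> 2" for a b
  proof -
    have "?g (a,b) * qbinom q b 1 = (if a = n \<and> b = s then qbinom q s 1 else 0)"
      using coeff[of "a + 1" a 1 "b - 1"] that s by (auto simp: bas_def)
    moreover have "qbinom q b 1 \<noteq> 0" using qbinom_1_right_nonzero[OF q] that by simp
    ultimately show ?thesis by (auto split: if_splits)
  qed
  have deg1: "?g (a,1) = 0" for a
  proof -
    have "?g (a,1) = ?g (a,1) * (if a + 1 = n + int s then 1 else 0)"
      using coeff[of "a + 1" a 1 0] s by (auto simp: bas_def)
    moreover have "?g (a,1) = (if a = n then ?g (a,1) else 0)"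
      using coeff[of a a 0 1] s by (auto simp: bas_def)
    ultimately show ?thesis using s by (auto split: if_splits)
  qed
  have deg0: "?g (a,0) = 0" if "a \<noteq> n" "a \<noteq> n + int s" for a
    using coeff[of a a 0 0] s that by (auto simp: bas_def)
  have deg0_n: "?g (n,0) = - ?g (n + int s, 0)"
    using coeff[of "n + int s" n 0 0] s by (auto simp: bas_def add_eq_0_iff)
  fix c :: "int \<times> nat"
  obtain a b where c: "c = (a,b)" by (metis prod.exhaust)
  consider "b = 0" | "b = 1" | "b \<ge> 2" by linarith
  then show "?g c = bas (n,s) c + ?g (n + int s, 0) * (bas (n + int s, 0) c - bas (n,0) c)"
    by cases (use high deg1 deg0 deg0_n s in \<open>auto simp: c bas_def\<close>)
qed

theorem lemma3p5:
  fixes q :: "'k::field" and s :: nat and \<phi> :: "(int \<times> nat \<Rightarrow> 'k) \<Rightarrow> (int \<times> nat \<Rightarrow> 'k)"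
  assumes "q \<noteq> 0" and "\<forall>n::nat. n > 0 \<longrightarrow> q ^ n \<noteq> 1"
    and "s \<ge> 2" and "\<phi> \<in> Aut_m q (s - 1)"
  shows "\<exists>!\<beta> :: int \<Rightarrow> 'k. \<forall>n::int.
           \<phi> (bas (n, s)) = (\<lambda>c. bas (n, s) c + \<beta> n * (bas (n + int s, 0) c - bas (n, 0) c))"
proof -
  have bij: "bij_betw \<phi> Hsp Hsp"
    and comult: "\<And>f. f \<in> Hsp \<Longrightarrow> comult q (\<phi> f) = tmap \<phi> \<phi> (comult q f)"
    and fix_low: "\<And>h. h \<in> Hsp \<Longrightarrow> \<forall>a\<in>csupp h. snd a \<le> s - 1 \<Longrightarrow> \<phi> h = h"
    using assms(4) unfolding Aut_m_def Aut_c_def by blast+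
  have fix_bas: "\<phi> (bas (m,j)) = bas (m,j)" if "j < s" for m j
    using that fix_low[OF bas_in_Hsp] by (simp add: csupp_bas)
  have fin: "finite (csupp (\<phi> (bas (n,s))))" for n
    using bij_betw_apply[OF bij bas_in_Hsp] by (simp add: Hsp_def)
  note shape = image_bas_shape[OF assms(2,3) fix_bas fin comult[OF bas_in_Hsp]]
  show ?thesis
  proof (rule ex1I[where a="\<lambda>n. \<phi> (bas (n,s)) (n + int s, 0)"])
    fix \<beta> assume "\<forall>n. \<phi> (bas (n, s)) = (\<lambda>c. bas (n, s) c + \<beta> n * (bas (n + int s, 0) c - bas (n, 0) c))"
    then show "\<beta> = (\<lambda>n. \<phi> (bas (n,s)) (n + int s, 0))"
      using assms(3) by (auto simp: fun_eq_iff bas_def)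
  qed (use shape in blast)
qed

end
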